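(* Let $P,Q$ be join-semilattices with a least element. Then: (1) $Q$ is embeddable in $P$ by a join-preserving map (an injective $f$ with $f(x\vee y)=f(x)\vee f(y)$) if and only if $Q$ is embeddable in $P$ by a map preserving finite joins. (2) If $Q$ is embeddable in $P$ by a join-preserving map, then $J(Q)$ is embeddable in $J(P)$ by a map preserving arbitrary joins. Suppose moreover $Q=I_{<\omega}(R)$ for some poset $R$. Then: (3) $Q$ is embeddable in $P$ as a poset if and only if $Q$ is embeddable in $P$ by a map preserving finite joins. (4) $J(Q)$ is embeddable in $J(P)$ as a poset if and only if $J(Q)$ is embeddable in $J(P)$ by a map preserving arbitrary joins. (5) If $\downarrow x$ is finite for every $x\in R$, then $Q$ is embeddable in $P$ as a poset if and only if $J(Q)$ is embeddable in $J(P)$ as a poset.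
   Context: A map preserves finite (resp. arbitrary) joins if $f(\bigvee X)=\bigvee\{f(x):x\in X\}$ for every finite (resp. arbitrary) subset $X$. An ideal is a non-empty up-directed initial segment; $J(\cdot)$ denotes the set of ideals ordered by inclusion. For a poset $R$, $I_{<\omega}(R)$ is the set of finitely generated initial segments $\downarrow A$ ($A\subseteq R$ finite) ordered by inclusion, a join-semilattice with join $=$ union and least element $\emptyset$; $\downarrow x=\{y\in R: y\le x\}$. Embedding as a poset means order-embedding. *)

theory Defs
  imports Main
begin

definition poset_on :: "'a set \<Rightarrow> ('a \<Rightarrow> 'a \<Rightarrow> bool) \<Rightarrow> bool" where
  "poset_on A le \<longleftrightarrow>
     (\<forall>x\<in>A. le x x) \<and>
     (\<forall>x\<in>A. \<forall>y\<in>A. le x y \<and> le y x \<longrightarrow> x = y) \<and>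
     (\<forall>x\<in>A. \<forall>y\<in>A. \<forall>z\<in>A. le x y \<and> le y z \<longrightarrow> le x z)"

definition lub_in :: "'a set \<Rightarrow> ('a \<Rightarrow> 'a \<Rightarrow> bool) \<Rightarrow> 'a set \<Rightarrow> 'a \<Rightarrow> bool" where
  "lub_in A le X s \<longleftrightarrow>
     s \<in> A \<and> (\<forall>x\<in>X. le x s) \<and> (\<forall>u\<in>A. (\<forall>x\<in>X. le x u) \<longrightarrow> le s u)"

definition join_semilattice_bot :: "'a set \<Rightarrow> ('a \<Rightarrow> 'a \<Rightarrow> bool) \<Rightarrow> bool" where
  "join_semilattice_bot A le \<longleftrightarrow>
     poset_on A le \<and>
     (\<forall>x\<in>A. \<forall>y\<in>A. \<exists>s. lub_in A le {x, y} s) \<and>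
     (\<exists>b\<in>A. \<forall>x\<in>A. le b x)"

definition ideals :: "'a set \<Rightarrow> ('a \<Rightarrow> 'a \<Rightarrow> bool) \<Rightarrow> 'a set set" where
  "ideals A le = {I. I \<subseteq> A \<and> I \<noteq> {} \<and>
     (\<forall>x\<in>I. \<forall>y\<in>A. le y x \<longrightarrow> y \<in> I) \<and>
     (\<forall>x\<in>I. \<forall>y\<in>I. \<exists>z\<in>I. le x z \<and> le y z)}"

definition down_set :: "'a set \<Rightarrow> ('a \<Rightarrow> 'a \<Rightarrow> bool) \<Rightarrow> 'a set \<Rightarrow> 'a set" where
  "down_set R le X = {y\<in>R. \<exists>a\<in>X. le y a}"

definition fin_init_segs :: "'a set \<Rightarrow> ('a \<Rightarrow> 'a \<Rightarrow> bool) \<Rightarrow> 'a set set" where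
  "fin_init_segs R le = {down_set R le X | X. X \<subseteq> R \<and> finite X}"

definition order_embedding ::
  "'a set \<Rightarrow> ('a \<Rightarrow> 'a \<Rightarrow> bool) \<Rightarrow> 'b set \<Rightarrow> ('b \<Rightarrow> 'b \<Rightarrow> bool) \<Rightarrow> ('a \<Rightarrow> 'b) \<Rightarrow> bool" where
  "order_embedding A leA B leB f \<longleftrightarrow>
     f ` A \<subseteq> B \<and> (\<forall>x\<in>A. \<forall>y\<in>A. leA x y \<longleftrightarrow> leB (f x) (f y))"

definition join_embedding ::
  "'a set \<Rightarrow> ('a \<Rightarrow> 'a \<Rightarrow> bool) \<Rightarrow> 'b set \<Rightarrow> ('b \<Rightarrow> 'b \<Rightarrow> bool) \<Rightarrow> ('a \<Rightarrow> 'b) \<Rightarrow> bool" where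
  "join_embedding A leA B leB f \<longleftrightarrow>
     f ` A \<subseteq> B \<and> inj_on f A \<and>
     (\<forall>x\<in>A. \<forall>y\<in>A. \<forall>s. lub_in A leA {x, y} s \<longrightarrow> lub_in B leB {f x, f y} (f s))"

definition fin_join_embedding ::
  "'a set \<Rightarrow> ('a \<Rightarrow> 'a \<Rightarrow> bool) \<Rightarrow> 'b set \<Rightarrow> ('b \<Rightarrow> 'b \<Rightarrow> bool) \<Rightarrow> ('a \<Rightarrow> 'b) \<Rightarrow> bool" where
  "fin_join_embedding A leA B leB f \<longleftrightarrow>
     f ` A \<subseteq> B \<and> inj_on f A \<and>
     (\<forall>X. X \<subseteq> A \<and> finite X \<longrightarrow> (\<forall>s. lub_in A leA X s \<longrightarrow> lub_in B leB (f ` X) (f s)))"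

definition arb_join_embedding ::
  "'a set \<Rightarrow> ('a \<Rightarrow> 'a \<Rightarrow> bool) \<Rightarrow> 'b set \<Rightarrow> ('b \<Rightarrow> 'b \<Rightarrow> bool) \<Rightarrow> ('a \<Rightarrow> 'b) \<Rightarrow> bool" where
  "arb_join_embedding A leA B leB f \<longleftrightarrow>
     f ` A \<subseteq> B \<and> inj_on f A \<and>
     (\<forall>X. X \<subseteq> A \<longrightarrow> (\<forall>s. lub_in A leA X s \<longrightarrow> lub_in B leB (f ` X) (f s)))"

end

theory Submission
  imports Defs
begin

text \<open>
  (1) A join embedding can be redefined at \<open>\<bottom>\<close> to send \<open>\<bottom>\<close> to \<open>\<bottom>\<close>, and binary joins together with
  \<open>\<bottom>\<close> generate all finite joins.
  (2) A finite-join embedding \<open>f\<close> lifts to \<open>I \<mapsto> \<down>f[I]\<close> on ideals; this preserves arbitrary joins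
  because the preimage under \<open>f\<close> of an ideal of \<open>P\<close> is an ideal of \<open>Q\<close>.
  (3), (4) Every element of \<open>I\<^sub><\<^sub>\<omega>(R)\<close>, and every ideal of it (these correspond to initial segments
  of \<open>R\<close> via their unions), is the join of the principal elements it contains. Given an order
  embedding \<open>\<phi>\<close>, sending \<open>X\<close> to the join of the \<open>\<phi>\<close>-images of these principal elements gives
  a map that preserves the joins which are unions, and it stays injective since it lies
  between \<open>\<phi>(\<down>a)\<close> for \<open>a \<in> X\<close> and \<open>\<phi>(X)\<close>.
  (5) One direction is the lifting of (2); for the other, pick for each \<open>a\<close> an element witnessing
  that \<open>\<psi>\<close> separates the ideals of segments inside \<open>\<down>a\<close> and inside \<open>R - \<up>a\<close>, and send the
  (finite) set \<open>X\<close> to the join of the witnesses of its elements.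
\<close>

section \<open>Least upper bounds\<close>

lemma poset_on_refl: "poset_on A le \<Longrightarrow> x \<in> A \<Longrightarrow> le x x"
  unfolding poset_on_def by blast

lemma poset_on_antisym:
  "poset_on A le \<Longrightarrow> x \<in> A \<Longrightarrow> y \<in> A \<Longrightarrow> le x y \<Longrightarrow> le y x \<Longrightarrow> x = y"
  unfolding poset_on_def by blast

lemma poset_on_trans:
  "poset_on A le \<Longrightarrow> x \<in> A \<Longrightarrow> y \<in> A \<Longrightarrow> z \<in> A \<Longrightarrow> le x y \<Longrightarrow> le y z \<Longrightarrow> le x z"
  unfolding poset_on_def by blast

lemma poset_on_subset: "poset_on A (\<subseteq>)"
  unfolding poset_on_def by blast

lemma lub_inI:
  "s \<in> A \<Longrightarrow> (\<And>x. x \<in> X \<Longrightarrow> le x s) \<Longrightarrow> (\<And>u. u \<in> A \<Longrightarrow> \<forall>x\<in>X. le x u \<Longrightarrow> le s u)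
   \<Longrightarrow> lub_in A le X s"
  unfolding lub_in_def by blast

lemma lub_in_mem: "lub_in A le X s \<Longrightarrow> s \<in> A"
  unfolding lub_in_def by blast

lemma lub_in_upper: "lub_in A le X s \<Longrightarrow> x \<in> X \<Longrightarrow> le x s"
  unfolding lub_in_def by blast

lemma lub_in_least: "lub_in A le X s \<Longrightarrow> u \<in> A \<Longrightarrow> (\<And>x. x \<in> X \<Longrightarrow> le x u) \<Longrightarrow> le s u"
  unfolding lub_in_def by blast

lemma lub_in_empty_iff: "lub_in A le {} b \<longleftrightarrow> b \<in> A \<and> (\<forall>x\<in>A. le b x)"
  unfolding lub_in_def by blast

lemma lub_in_mono: "lub_in A le X s \<Longrightarrow> lub_in A le Y t \<Longrightarrow> X \<subseteq> Y \<Longrightarrow> le s t"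
  unfolding lub_in_def by blast

lemma lub_in_unique:
  assumes "poset_on A le" "lub_in A le X s" "lub_in A le X t"
  shows "s = t"
  using poset_on_antisym[OF assms(1) lub_in_mem[OF assms(2)] lub_in_mem[OF assms(3)]]
    lub_in_mono[OF assms(2,3)] lub_in_mono[OF assms(3,2)] by blast

lemma lub_in_pair_of_le:
  "poset_on A le \<Longrightarrow> x \<in> A \<Longrightarrow> y \<in> A \<Longrightarrow> le x y \<Longrightarrow> lub_in A le {x, y} y"
  by (rule lub_inI) (auto intro: poset_on_refl)

lemma lub_in_insert:
  assumes A: "poset_on A le" "X \<subseteq> A" "x \<in> A"
    and t: "lub_in A le X t" and u: "lub_in A le {x, t} u"
  shows "lub_in A le (insert x X) u"
proof (rule lub_inI)
  show "u \<in> A" using u by (rule lub_in_mem)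
  have tu: "le t u" "le x u" using lub_in_upper[OF u] by auto
  show "le y u" if "y \<in> insert x X" for y
  proof (cases "y = x")
    case False
    then have "y \<in> X" using that by blast
    then show ?thesis
      using poset_on_trans[OF A(1) _ lub_in_mem[OF t] lub_in_mem[OF u] lub_in_upper[OF t] tu(1)]
        A(2) by blast
  qed (use tu in simp)
  show "le u v" if "v \<in> A" "\<forall>y\<in>insert x X. le y v" for v
    using that by (auto intro!: lub_in_least[OF u] lub_in_least[OF t])
qed

lemma lub_in_cofinal:
  assumes A: "poset_on A le" "X \<subseteq> A" and "B \<subseteq> X"
    and cofinal: "\<And>x. x \<in> X \<Longrightarrow> \<exists>b\<in>B. le x b" and s: "lub_in A le B s"
  shows "lub_in A le X s"
proof (rule lub_inI)
  show "s \<in> A" using s by (rule lub_in_mem)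
  show "le x s" if "x \<in> X" for x
  proof -
    from cofinal[OF that] obtain b where "b \<in> B" "le x b" by blast
    then show ?thesis
      using poset_on_trans[OF A(1) _ _ lub_in_mem[OF s] _ lub_in_upper[OF s]] that assms(2,3)
      by blast
  qed
  show "le s u" if "u \<in> A" "\<forall>x\<in>X. le x u" for u
    using that \<open>B \<subseteq> X\<close> by (auto intro: lub_in_least[OF s])
qed

lemma lub_in_UN_lubs:
  assumes A: "poset_on A le" and S: "\<And>i. i \<in> F \<Longrightarrow> S i \<subseteq> A"
    and t: "\<And>i. i \<in> F \<Longrightarrow> lub_in A le (S i) (t i)" and s: "lub_in A le (\<Union>i\<in>F. S i) s"
  shows "lub_in A le (t ` F) s"
proof (rule lub_inI)
  show "s \<in> A" using s by (rule lub_in_mem)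
  show "le y s" if "y \<in> t ` F" for y
    using that lub_in_least[OF t lub_in_mem[OF s]] lub_in_upper[OF s] by blast
  show "le s u" if u: "u \<in> A" "\<forall>y\<in>t ` F. le y u" for u
  proof (rule lub_in_least[OF s u(1)])
    fix x assume "x \<in> (\<Union>i\<in>F. S i)"
    then obtain i where i: "i \<in> F" "x \<in> S i" by blast
    then show "le x u"
      using poset_on_trans[OF A _ lub_in_mem[OF t] u(1) lub_in_upper[OF t]] S u(2) by blast
  qed
qed

lemma join_semilattice_bot_poset: "join_semilattice_bot A le \<Longrightarrow> poset_on A le"
  unfolding join_semilattice_bot_def by blast

lemma join_semilattice_bot_lub_pair:
  "join_semilattice_bot A le \<Longrightarrow> x \<in> A \<Longrightarrow> y \<in> A \<Longrightarrow> \<exists>s. lub_in A le {x, y} s"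
  unfolding join_semilattice_bot_def by blast

lemma join_semilattice_bot_lub_empty: "join_semilattice_bot A le \<Longrightarrow> \<exists>b. lub_in A le {} b"
  unfolding join_semilattice_bot_def lub_in_empty_iff by blast

lemma join_semilattice_bot_finite_lub:
  assumes A: "join_semilattice_bot A le" and "finite X" "X \<subseteq> A"
  shows "\<exists>s. lub_in A le X s"
  using assms(2,3)
proof (induction X rule: finite_induct)
  case empty
  show ?case using join_semilattice_bot_lub_empty[OF A] .
next
  case (insert x X)
  then obtain t where t: "lub_in A le X t" by auto
  obtain u where "lub_in A le {x, t} u"
    using join_semilattice_bot_lub_pair[OF A _ lub_in_mem[OF t]] insert.prems by blast
  then show ?case
    using lub_in_insert[OF join_semilattice_bot_poset[OF A] _ _ t] insert.prems by blast
qed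

section \<open>Join embeddings\<close>

lemma order_embedding_mem: "order_embedding A leA B leB f \<Longrightarrow> x \<in> A \<Longrightarrow> f x \<in> B"
  unfolding order_embedding_def by blast

lemma order_embedding_iff:
  "order_embedding A leA B leB f \<Longrightarrow> x \<in> A \<Longrightarrow> y \<in> A \<Longrightarrow> leB (f x) (f y) \<longleftrightarrow> leA x y"
  unfolding order_embedding_def by blast

lemma order_embedding_inj_on:
  assumes "poset_on A leA" "order_embedding A leA B leB f"
  shows "inj_on f A"
proof (rule inj_onI)
  fix x y assume xy: "x \<in> A" "y \<in> A" "f x = f y"
  then have "leA x y" "leA y x"
    using order_embedding_iff[OF assms(2)] poset_on_refl[OF assms(1)] by metis+
  then show "x = y" using poset_on_antisym[OF assms(1) xy(1,2)] by blast
qed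

lemma join_embedding_mem: "join_embedding A leA B leB f \<Longrightarrow> x \<in> A \<Longrightarrow> f x \<in> B"
  unfolding join_embedding_def by blast

lemma join_embedding_inj_on: "join_embedding A leA B leB f \<Longrightarrow> inj_on f A"
  unfolding join_embedding_def by blast

lemma join_embedding_lub_pair:
  "join_embedding A leA B leB f \<Longrightarrow> x \<in> A \<Longrightarrow> y \<in> A \<Longrightarrow> lub_in A leA {x, y} s
   \<Longrightarrow> lub_in B leB {f x, f y} (f s)"
  unfolding join_embedding_def by blast

lemma fin_join_embedding_imp_join_embedding:
  assumes f: "fin_join_embedding A leA B leB f"
  shows "join_embedding A leA B leB f"
proof -
  have "lub_in B leB (f ` {x, y}) (f s)" if "x \<in> A" "y \<in> A" "lub_in A leA {x, y} s" for x y s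
  proof -
    have "{x, y} \<subseteq> A \<and> finite {x, y}" using that by simp
    then show ?thesis using f that(3) unfolding fin_join_embedding_def by blast
  qed
  then show ?thesis using f unfolding fin_join_embedding_def join_embedding_def by simp
qed

lemma arb_join_embedding_imp_join_embedding:
  assumes f: "arb_join_embedding A leA B leB f"
  shows "join_embedding A leA B leB f"
proof -
  have "lub_in B leB (f ` {x, y}) (f s)" if "x \<in> A" "y \<in> A" "lub_in A leA {x, y} s" for x y s
  proof -
    have "{x, y} \<subseteq> A" using that by simp
    then show ?thesis using f that(3) unfolding arb_join_embedding_def by blast
  qed
  then show ?thesis using f unfolding arb_join_embedding_def join_embedding_def by simp
qed

text \<open>Both orders are recovered from binary joins: \<open>x \<le> y\<close> iff \<open>x \<squnion> y = y\<close>.\<close>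
lemma join_embedding_imp_order_embedding:
  assumes A: "poset_on A leA" and B: "poset_on B leB"
    and lub_pair: "\<And>x y. x \<in> A \<Longrightarrow> y \<in> A \<Longrightarrow> \<exists>s. lub_in A leA {x, y} s"
    and f: "join_embedding A leA B leB f"
  shows "order_embedding A leA B leB f"
  unfolding order_embedding_def
proof (intro conjI ballI)
  show "f ` A \<subseteq> B" using join_embedding_mem[OF f] by blast
  fix x y assume x: "x \<in> A" and y: "y \<in> A"
  obtain s where s: "lub_in A leA {x, y} s" using lub_pair[OF x y] by blast
  have fs: "lub_in B leB {f x, f y} (f s)" using join_embedding_lub_pair[OF f x y s] .
  have fx: "f x \<in> B" and fy: "f y \<in> B" using join_embedding_mem[OF f] x y by blast+
  have "leA x y \<longleftrightarrow> s = y"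
  proof
    assume "leA x y"
    then show "s = y" by (rule lub_in_unique[OF A s lub_in_pair_of_le[OF A x y]])
  qed (use lub_in_upper[OF s] in auto)
  also have "\<dots> \<longleftrightarrow> f s = f y"
    using inj_on_eq_iff[OF join_embedding_inj_on[OF f] lub_in_mem[OF s] y] by simp
  also have "\<dots> \<longleftrightarrow> leB (f x) (f y)"
  proof
    assume "leB (f x) (f y)"
    then show "f s = f y" by (rule lub_in_unique[OF B fs lub_in_pair_of_le[OF B fx fy]])
  qed (use lub_in_upper[OF fs] in auto)
  finally show "leA x y \<longleftrightarrow> leB (f x) (f y)" .
qed

lemma join_embedding_bot_imp_fin_join_embedding:
  assumes A: "join_semilattice_bot A leA" and B: "join_semilattice_bot B leB"
    and f: "join_embedding A leA B leB f"
    and bot: "\<And>b. lub_in A leA {} b \<Longrightarrow> lub_in B leB {} (f b)"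
  shows "fin_join_embedding A leA B leB f"
proof -
  have lub_image: "\<exists>t. lub_in A leA X t \<and> lub_in B leB (f ` X) (f t)"
    if "finite X" "X \<subseteq> A" for X
    using that
  proof (induction X rule: finite_induct)
    case empty
    then show ?case using join_semilattice_bot_lub_empty[OF A] bot by auto
  next
    case (insert x X)
    then obtain t where t: "lub_in A leA X t" "lub_in B leB (f ` X) (f t)" by auto
    have x: "x \<in> A" and t_mem: "t \<in> A" using insert.prems lub_in_mem[OF t(1)] by auto
    obtain u where u: "lub_in A leA {x, t} u"
      using join_semilattice_bot_lub_pair[OF A x t_mem] by blast
    have "lub_in A leA (insert x X) u"
      using lub_in_insert[OF join_semilattice_bot_poset[OF A] _ x t(1) u] insert.prems by blast
    moreover have "lub_in B leB (insert (f x) (f ` X)) (f u)"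
      using lub_in_insert[OF join_semilattice_bot_poset[OF B] _ join_embedding_mem[OF f x] t(2)
          join_embedding_lub_pair[OF f x t_mem u]] join_embedding_mem[OF f] insert.prems by blast
    ultimately show ?case by auto
  qed
  show ?thesis
    unfolding fin_join_embedding_def
    using join_embedding_mem[OF f] join_embedding_inj_on[OF f] lub_image
      lub_in_unique[OF join_semilattice_bot_poset[OF A]] by blast
qed

text \<open>The image of every element other than \<open>\<bottom>\<close> lies strictly above \<open>\<bottom>\<close>, so redefining the map
  at \<open>\<bottom>\<close> keeps it injective.\<close>
lemma join_embedding_reset_bot:
  assumes P: "join_semilattice_bot P leP" and Q: "join_semilattice_bot Q leQ"
    and f: "join_embedding Q leQ P leP f"
    and bQ: "lub_in Q leQ {} bQ" and bP: "lub_in P leP {} bP"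
  shows "join_embedding Q leQ P leP (f(bQ := bP))"
proof -
  have pP: "poset_on P leP" and pQ: "poset_on Q leQ"
    using P Q join_semilattice_bot_poset by blast+
  have bQ_le: "bQ \<in> Q" "\<And>x. x \<in> Q \<Longrightarrow> leQ bQ x" and bP_le: "bP \<in> P" "\<And>x. x \<in> P \<Longrightarrow> leP bP x"
    using bQ bP unfolding lub_in_empty_iff by auto
  note f_ord = join_embedding_imp_order_embedding[OF pQ pP
      join_semilattice_bot_lub_pair[OF Q] f]
  note f_mem = join_embedding_mem[OF f]
  let ?g = "f(bQ := bP)"
  have above_bot: "f x \<noteq> bP" if x: "x \<in> Q" "x \<noteq> bQ" for x
  proof
    assume "f x = bP"
    then have "f bQ = f x"
      using poset_on_antisym[OF pP f_mem[OF bQ_le(1)] f_mem[OF x(1)]] bP_le(2)[OF f_mem[OF bQ_le(1)]]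
        order_embedding_iff[OF f_ord bQ_le(1) x(1)] bQ_le(2)[OF x(1)] by simp
    then show False using inj_onD[OF join_embedding_inj_on[OF f] _ bQ_le(1) x(1)] x(2) by blast
  qed
  have g_mem: "?g x \<in> P" if "x \<in> Q" for x using f_mem[OF that] bP_le(1) by simp
  have "inj_on ?g Q"
  proof (rule inj_onI)
    fix x y assume "x \<in> Q" "y \<in> Q" "?g x = ?g y"
    then show "x = y"
      using inj_onD[OF join_embedding_inj_on[OF f]] above_bot
      by (cases "x = bQ"; cases "y = bQ") (auto split: if_splits)
  qed
  moreover have "lub_in P leP {?g x, ?g y} (?g s)"
    if x: "x \<in> Q" and y: "y \<in> Q" and s: "lub_in Q leQ {x, y} s" for x y s
  proof -
    have bot_pair: "lub_in P leP {bP, ?g z} (?g z)" if "z \<in> Q" for z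
      using lub_in_pair_of_le[OF pP bP_le(1) g_mem[OF that] bP_le(2)[OF g_mem[OF that]]] .
    consider "x = bQ" | "y = bQ" | "x \<noteq> bQ" "y \<noteq> bQ" by blast
    then show ?thesis
    proof cases
      case 1
      then have "s = y"
        using lub_in_unique[OF pQ _ lub_in_pair_of_le[OF pQ bQ_le(1) y bQ_le(2)[OF y]]] s by simp
      then show ?thesis using bot_pair[OF y] 1 by simp
    next
      case 2
      then have "s = x"
        using lub_in_unique[OF pQ _ lub_in_pair_of_le[OF pQ bQ_le(1) x bQ_le(2)[OF x]]] s
        by (simp add: insert_commute)
      then show ?thesis using bot_pair[OF x] 2 by (simp add: insert_commute)
    next
      case 3
      have "s \<noteq> bQ"
      proof
        assume "s = bQ"
        then have "leQ x bQ" using lub_in_upper[OF s] by simp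
        then show False using poset_on_antisym[OF pQ x bQ_le(1) _ bQ_le(2)[OF x]] 3 by blast
      qed
      then show ?thesis using join_embedding_lub_pair[OF f x y s] 3 by simp
    qed
  qed
  ultimately show ?thesis unfolding join_embedding_def using g_mem by blast
qed

lemma ex_join_embedding_iff_ex_fin_join_embedding:
  assumes P: "join_semilattice_bot P leP" and Q: "join_semilattice_bot Q leQ"
  shows "(\<exists>f. join_embedding Q leQ P leP f) \<longleftrightarrow> (\<exists>f. fin_join_embedding Q leQ P leP f)"
proof
  assume "\<exists>f. join_embedding Q leQ P leP f"
  then obtain f where f: "join_embedding Q leQ P leP f" ..
  obtain bQ bP where bQ: "lub_in Q leQ {} bQ" and bP: "lub_in P leP {} bP"
    using join_semilattice_bot_lub_empty[OF Q] join_semilattice_bot_lub_empty[OF P] by blast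
  have "fin_join_embedding Q leQ P leP (f(bQ := bP))"
    using join_embedding_bot_imp_fin_join_embedding[OF Q P join_embedding_reset_bot[OF P Q f bQ bP]]
      lub_in_unique[OF join_semilattice_bot_poset[OF Q] _ bQ] bP by fastforce
  then show "\<exists>f. fin_join_embedding Q leQ P leP f" by blast
qed (blast intro: fin_join_embedding_imp_join_embedding)

section \<open>Ideals\<close>

lemma idealI:
  "I \<subseteq> A \<Longrightarrow> I \<noteq> {} \<Longrightarrow> (\<And>x y. x \<in> I \<Longrightarrow> y \<in> A \<Longrightarrow> le y x \<Longrightarrow> y \<in> I)
   \<Longrightarrow> (\<And>x y. x \<in> I \<Longrightarrow> y \<in> I \<Longrightarrow> \<exists>z\<in>I. le x z \<and> le y z) \<Longrightarrow> I \<in> ideals A le"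
  unfolding ideals_def by blast

lemma ideal_subset: "I \<in> ideals A le \<Longrightarrow> I \<subseteq> A"
  unfolding ideals_def by blast

lemma ideal_nonempty: "I \<in> ideals A le \<Longrightarrow> I \<noteq> {}"
  unfolding ideals_def by blast

lemma ideal_downward: "I \<in> ideals A le \<Longrightarrow> x \<in> I \<Longrightarrow> y \<in> A \<Longrightarrow> le y x \<Longrightarrow> y \<in> I"
  unfolding ideals_def by blast

lemma ideal_directed: "I \<in> ideals A le \<Longrightarrow> x \<in> I \<Longrightarrow> y \<in> I \<Longrightarrow> \<exists>z\<in>I. le x z \<and> le y z"
  unfolding ideals_def by blast

lemma ideal_finite_upper_bound:
  assumes A: "poset_on A le" and U: "U \<in> ideals A le" and "finite S" "S \<subseteq> U"
  shows "\<exists>z\<in>U. \<forall>x\<in>S. le x z"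
  using assms(3,4)
proof (induction S rule: finite_induct)
  case empty
  show ?case using ideal_nonempty[OF U] by blast
next
  case (insert x S)
  then obtain z where z: "z \<in> U" "\<forall>y\<in>S. le y z" by auto
  obtain w where w: "w \<in> U" "le x w" "le z w"
    using ideal_directed[OF U _ z(1)] insert.prems by blast
  have zw: "z \<in> A" "w \<in> A" using z(1) w(1) ideal_subset[OF U] by blast+
  have "le y w" if "y \<in> S" for y
  proof -
    have "y \<in> A" using that insert.prems ideal_subset[OF U] by blast
    then show ?thesis using poset_on_trans[OF A _ zw z(2)[rule_format, OF that] w(3)] by blast
  qed
  then show ?case using w by blast
qed

lemma ideal_lub_mem:
  assumes A: "poset_on A le" and U: "U \<in> ideals A le" and "finite S" "S \<subseteq> U"
    and t: "lub_in A le S t"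
  shows "t \<in> U"
proof -
  obtain z where z: "z \<in> U" "\<forall>x\<in>S. le x z"
    using ideal_finite_upper_bound[OF A U assms(3,4)] by blast
  have "z \<in> A" using z(1) ideal_subset[OF U] by blast
  then have "le t z" using lub_in_least[OF t] z(2) by blast
  then show ?thesis using ideal_downward[OF U z(1) lub_in_mem[OF t]] by blast
qed

lemma carrier_in_ideals:
  assumes A: "join_semilattice_bot A le"
  shows "A \<in> ideals A le"
proof (rule idealI)
  obtain b where "lub_in A le {} b" using join_semilattice_bot_lub_empty[OF A] by blast
  then show "A \<noteq> {}" using lub_in_mem by fast
next
  fix x y assume "x \<in> A" "y \<in> A"
  then obtain s where s: "lub_in A le {x, y} s" using join_semilattice_bot_lub_pair[OF A] by blast
  show "\<exists>z\<in>A. le x z \<and> le y z" using lub_in_mem[OF s] lub_in_upper[OF s] by blast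
qed simp_all

lemma Inter_ideals_in_ideals:
  assumes A: "join_semilattice_bot A le" and \<U>: "\<U> \<subseteq> ideals A le" "\<U> \<noteq> {}"
  shows "\<Inter>\<U> \<in> ideals A le"
proof (rule idealI)
  have pA: "poset_on A le" using join_semilattice_bot_poset[OF A] .
  show "\<Inter>\<U> \<subseteq> A" using \<U> ideal_subset by blast
  obtain b where b: "lub_in A le {} b" using join_semilattice_bot_lub_empty[OF A] ..
  have "b \<in> \<Inter>\<U>" using ideal_lub_mem[OF pA _ _ _ b] \<U>(1) by blast
  then show "\<Inter>\<U> \<noteq> {}" by blast
  show "y \<in> \<Inter>\<U>" if "x \<in> \<Inter>\<U>" "y \<in> A" "le y x" for x y
    using that \<U>(1) by (blast intro: ideal_downward)
  show "\<exists>z\<in>\<Inter>\<U>. le x z \<and> le y z" if xy: "x \<in> \<Inter>\<U>" "y \<in> \<Inter>\<U>" for x y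
  proof -
    have "x \<in> A" "y \<in> A" using xy \<U> by (blast dest: ideal_subset)+
    then obtain s where s: "lub_in A le {x, y} s" using join_semilattice_bot_lub_pair[OF A] by blast
    have "s \<in> \<Inter>\<U>" using ideal_lub_mem[OF pA _ _ _ s] xy \<U>(1) by blast
    then show ?thesis using lub_in_upper[OF s] by blast
  qed
qed

definition ideal_join :: "'a set \<Rightarrow> ('a \<Rightarrow> 'a \<Rightarrow> bool) \<Rightarrow> 'a set set \<Rightarrow> 'a set" where
  "ideal_join A le F = \<Inter>{U \<in> ideals A le. \<Union>F \<subseteq> U}"

lemma ideal_join_lub:
  assumes A: "join_semilattice_bot A le" and F: "F \<subseteq> ideals A le"
  shows "lub_in (ideals A le) (\<subseteq>) F (ideal_join A le F)"
proof (rule lub_inI)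
  have "A \<in> {U \<in> ideals A le. \<Union>F \<subseteq> U}" using carrier_in_ideals[OF A] F ideal_subset by blast
  then show "ideal_join A le F \<in> ideals A le"
    unfolding ideal_join_def by (intro Inter_ideals_in_ideals[OF A]) auto
qed (unfold ideal_join_def; blast)+

lemma image_mem_down_set_image:
  "poset_on B le \<Longrightarrow> x \<in> I \<Longrightarrow> f x \<in> B \<Longrightarrow> f x \<in> down_set B le (f ` I)"
  unfolding down_set_def using poset_on_refl[of B le "f x"] by blast

lemma down_set_image_in_ideals:
  assumes B: "poset_on B leB" and f_mem: "f ` A \<subseteq> B"
    and f_mono: "\<And>x y. x \<in> A \<Longrightarrow> y \<in> A \<Longrightarrow> leA x y \<Longrightarrow> leB (f x) (f y)"
    and I: "I \<in> ideals A leA"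
  shows "down_set B leB (f ` I) \<in> ideals B leB"
proof (rule idealI)
  have fI: "f x \<in> down_set B leB (f ` I)" if "x \<in> I" for x
    by (rule image_mem_down_set_image[OF B that]) (use that f_mem ideal_subset[OF I] in blast)
  show "down_set B leB (f ` I) \<subseteq> B" unfolding down_set_def by blast
  show "down_set B leB (f ` I) \<noteq> {}" using ideal_nonempty[OF I] fI by blast
  show "y \<in> down_set B leB (f ` I)"
    if x: "x \<in> down_set B leB (f ` I)" and y: "y \<in> B" "leB y x" for x y
  proof -
    obtain a where a: "a \<in> I" "leB x (f a)" "x \<in> B" using x unfolding down_set_def by blast
    have "f a \<in> B" using a(1) f_mem ideal_subset[OF I] by blast
    then have "leB y (f a)" using poset_on_trans[OF B y(1) a(3) _ y(2) a(2)] by blast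
    then show ?thesis using a(1) y(1) unfolding down_set_def by blast
  qed
  show "\<exists>z\<in>down_set B leB (f ` I). leB x z \<and> leB y z"
    if xy: "x \<in> down_set B leB (f ` I)" "y \<in> down_set B leB (f ` I)" for x y
  proof -
    obtain a b where ab: "a \<in> I" "leB x (f a)" "x \<in> B" "b \<in> I" "leB y (f b)" "y \<in> B"
      using xy unfolding down_set_def by blast
    obtain c where c: "c \<in> I" "leA a c" "leA b c" using ideal_directed[OF I ab(1,4)] by blast
    have abc: "a \<in> A" "b \<in> A" "c \<in> A" using ab c ideal_subset[OF I] by blast+
    then have fabc: "f a \<in> B" "f b \<in> B" "f c \<in> B" using f_mem by blast+
    have "leB x (f c)"
      using poset_on_trans[OF B ab(3) fabc(1,3) ab(2) f_mono[OF abc(1,3) c(2)]] .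
    moreover have "leB y (f c)"
      using poset_on_trans[OF B ab(6) fabc(2,3) ab(5) f_mono[OF abc(2,3) c(3)]] .
    ultimately show ?thesis using fI[OF c(1)] by blast
  qed
qed

lemma ideals_order_embedding_down_set_image:
  assumes B: "poset_on B leB" and f: "order_embedding A leA B leB f"
  shows "order_embedding (ideals A leA) (\<subseteq>) (ideals B leB) (\<subseteq>) (\<lambda>I. down_set B leB (f ` I))"
  unfolding order_embedding_def
proof (intro conjI ballI)
  have "f ` A \<subseteq> B" using order_embedding_mem[OF f] by blast
  moreover have "leB (f x) (f y)" if "x \<in> A" "y \<in> A" "leA x y" for x y
    using order_embedding_iff[OF f that(1,2)] that(3) by blast
  ultimately have "down_set B leB (f ` I) \<in> ideals B leB" if "I \<in> ideals A leA" for I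
    by (rule down_set_image_in_ideals[OF B _ _ that])
  then show "(\<lambda>I. down_set B leB (f ` I)) ` ideals A leA \<subseteq> ideals B leB" by blast
  fix I J assume I: "I \<in> ideals A leA" and J: "J \<in> ideals A leA"
  show "I \<subseteq> J \<longleftrightarrow> down_set B leB (f ` I) \<subseteq> down_set B leB (f ` J)"
  proof
    assume "I \<subseteq> J"
    then show "down_set B leB (f ` I) \<subseteq> down_set B leB (f ` J)" unfolding down_set_def by blast
  next
    assume sub: "down_set B leB (f ` I) \<subseteq> down_set B leB (f ` J)"
    show "I \<subseteq> J"
    proof
      fix x assume x: "x \<in> I"
      then have "x \<in> A" using ideal_subset[OF I] by blast
      then have "f x \<in> down_set B leB (f ` J)"
        using sub image_mem_down_set_image[where f = f, OF B x order_embedding_mem[OF f \<open>x \<in> A\<close>]]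
        by blast
      then obtain y where y: "y \<in> J" "leB (f x) (f y)" unfolding down_set_def by blast
      have "y \<in> A" using y(1) ideal_subset[OF J] by blast
      then show "x \<in> J"
        using ideal_downward[OF J y(1) \<open>x \<in> A\<close>] order_embedding_iff[OF f \<open>x \<in> A\<close>] y(2) by blast
    qed
  qed
qed

lemma vimage_ideal_fin_join_embedding:
  assumes Q: "join_semilattice_bot Q leQ" and P: "poset_on P leP"
    and f: "fin_join_embedding Q leQ P leP f" and U: "U \<in> ideals P leP"
  shows "{x \<in> Q. f x \<in> U} \<in> ideals Q leQ"
proof (rule idealI)
  note f_join = fin_join_embedding_imp_join_embedding[OF f]
  note f_ord = join_embedding_imp_order_embedding[OF join_semilattice_bot_poset[OF Q] P
      join_semilattice_bot_lub_pair[OF Q] f_join]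
  obtain b where b: "lub_in Q leQ {} b" using join_semilattice_bot_lub_empty[OF Q] ..
  have "lub_in P leP {} (f b)" using f b unfolding fin_join_embedding_def by fastforce
  then have "f b \<in> U" using ideal_lub_mem[OF P U] by blast
  then show "{x \<in> Q. f x \<in> U} \<noteq> {}" using lub_in_mem[OF b] by blast
  show "y \<in> {x \<in> Q. f x \<in> U}" if x: "x \<in> {x \<in> Q. f x \<in> U}" and y: "y \<in> Q" "leQ y x" for x y
  proof -
    have "leP (f y) (f x)" using order_embedding_iff[OF f_ord y(1)] x y(2) by blast
    then show ?thesis using ideal_downward[OF U _ order_embedding_mem[OF f_ord y(1)]] x y(1) by blast
  qed
  show "\<exists>z\<in>{x \<in> Q. f x \<in> U}. leQ x z \<and> leQ y z"
    if xy: "x \<in> {x \<in> Q. f x \<in> U}" "y \<in> {x \<in> Q. f x \<in> U}" for x y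
  proof -
    obtain s where s: "lub_in Q leQ {x, y} s" using join_semilattice_bot_lub_pair[OF Q] xy by blast
    have "f s \<in> U"
      using ideal_lub_mem[OF P U _ _ join_embedding_lub_pair[OF f_join _ _ s]] xy by simp
    then show ?thesis using lub_in_mem[OF s] lub_in_upper[OF s] by blast
  qed
qed blast

lemma ideals_arb_join_embedding_down_set_image:
  assumes P: "join_semilattice_bot P leP" and Q: "join_semilattice_bot Q leQ"
    and f: "fin_join_embedding Q leQ P leP f"
  shows "arb_join_embedding (ideals Q leQ) (\<subseteq>) (ideals P leP) (\<subseteq>) (\<lambda>I. down_set P leP (f ` I))"
proof -
  let ?g = "\<lambda>I. down_set P leP (f ` I)"
  have pP: "poset_on P leP" using join_semilattice_bot_poset[OF P] .
  note f_join = fin_join_embedding_imp_join_embedding[OF f]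
  note g_ord = ideals_order_embedding_down_set_image[OF pP join_embedding_imp_order_embedding[OF
        join_semilattice_bot_poset[OF Q] pP join_semilattice_bot_lub_pair[OF Q] f_join]]
  have "lub_in (ideals P leP) (\<subseteq>) (?g ` F) (?g s)"
    if F: "F \<subseteq> ideals Q leQ" and s: "lub_in (ideals Q leQ) (\<subseteq>) F s" for F s
  proof (rule lub_inI)
    have s_mem: "s \<in> ideals Q leQ" using lub_in_mem[OF s] .
    show "?g s \<in> ideals P leP" using order_embedding_mem[OF g_ord s_mem] .
    show "J \<subseteq> ?g s" if "J \<in> ?g ` F" for J
      using that lub_in_upper[OF s] unfolding down_set_def by blast
    fix U assume U: "U \<in> ideals P leP" "\<forall>J\<in>?g ` F. J \<subseteq> U"
    let ?T = "{x \<in> Q. f x \<in> U}"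
    have "I \<subseteq> ?T" if "I \<in> F" for I
    proof
      fix x assume x: "x \<in> I"
      then have "x \<in> Q" using F that ideal_subset by blast
      then have "f x \<in> ?g I"
        using image_mem_down_set_image[where f = f, OF pP x join_embedding_mem[OF f_join]] by blast
      then show "x \<in> ?T" using U(2) that \<open>x \<in> Q\<close> by blast
    qed
    then have "s \<subseteq> ?T" by (rule lub_in_least[OF s vimage_ideal_fin_join_embedding[OF Q pP f U(1)]])
    show "?g s \<subseteq> U"
    proof
      fix p assume "p \<in> ?g s"
      then obtain x where "p \<in> P" "x \<in> s" "leP p (f x)" unfolding down_set_def by blast
      then show "p \<in> U" using \<open>s \<subseteq> ?T\<close> ideal_downward[OF U(1)] by blast
    qed
  qed
  then show ?thesis
    unfolding arb_join_embedding_def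
    using order_embedding_mem[OF g_ord] order_embedding_inj_on[OF poset_on_subset g_ord] by blast
qed

lemma ex_arb_join_embedding_ideals:
  assumes P: "join_semilattice_bot P leP" and Q: "join_semilattice_bot Q leQ"
    and "join_embedding Q leQ P leP f"
  shows "\<exists>g. arb_join_embedding (ideals Q leQ) (\<subseteq>) (ideals P leP) (\<subseteq>) g"
  using ideals_arb_join_embedding_down_set_image[OF P Q]
    ex_join_embedding_iff_ex_fin_join_embedding[OF P Q] assms(3) by blast

section \<open>Finitely generated initial segments and their ideals\<close>

lemma mem_fin_init_segs_iff:
  "X \<in> fin_init_segs R le \<longleftrightarrow> (\<exists>A. X = down_set R le A \<and> A \<subseteq> R \<and> finite A)"
  unfolding fin_init_segs_def by blast

lemma down_set_Un: "down_set R le (A \<union> B) = down_set R le A \<union> down_set R le B"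
  unfolding down_set_def by auto

lemma down_set_eq_UN_principal: "down_set R le A = (\<Union>a\<in>A. down_set R le {a})"
  unfolding down_set_def by auto

lemma subset_down_set: "poset_on R le \<Longrightarrow> A \<subseteq> R \<Longrightarrow> A \<subseteq> down_set R le A"
  unfolding down_set_def using poset_on_refl by fastforce

lemma principal_mem: "poset_on R le \<Longrightarrow> a \<in> R \<Longrightarrow> a \<in> down_set R le {a}"
  using subset_down_set[of R le "{a}"] by blast

lemma empty_in_fin_init_segs: "{} \<in> fin_init_segs R le"
  unfolding mem_fin_init_segs_iff by (rule exI[of _ "{}"]) (simp add: down_set_def)

lemma principal_in_fin_init_segs: "a \<in> R \<Longrightarrow> down_set R le {a} \<in> fin_init_segs R le"
  unfolding mem_fin_init_segs_iff by blast

lemma Un_in_fin_init_segs: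
  assumes "X \<in> fin_init_segs R le" "Y \<in> fin_init_segs R le"
  shows "X \<union> Y \<in> fin_init_segs R le"
proof -
  obtain A B where "X = down_set R le A" "A \<subseteq> R" "finite A" "Y = down_set R le B" "B \<subseteq> R" "finite B"
    using assms unfolding mem_fin_init_segs_iff by blast
  then show ?thesis unfolding mem_fin_init_segs_iff by (metis down_set_Un finite_UnI le_sup_iff)
qed

lemma Union_in_fin_init_segs:
  "finite \<X> \<Longrightarrow> \<X> \<subseteq> fin_init_segs R le \<Longrightarrow> \<Union>\<X> \<in> fin_init_segs R le"
  by (induction \<X> rule: finite_induct) (auto intro: empty_in_fin_init_segs Un_in_fin_init_segs)

lemma fin_init_segs_subset: "X \<in> fin_init_segs R le \<Longrightarrow> X \<subseteq> R"
  unfolding mem_fin_init_segs_iff down_set_def by blast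

lemma fin_init_segs_downward:
  assumes R: "poset_on R le" and X: "X \<in> fin_init_segs R le"
    and x: "x \<in> X" and y: "y \<in> R" "le y x"
  shows "y \<in> X"
proof -
  obtain A where A: "X = down_set R le A" "A \<subseteq> R"
    using X unfolding mem_fin_init_segs_iff by blast
  then obtain a where a: "a \<in> A" "le x a" "x \<in> R" using x unfolding down_set_def by blast
  then have "le y a" using poset_on_trans[OF R y(1) a(3) _ y(2) a(2)] A(2) by blast
  then show ?thesis using A(1) a(1) y(1) unfolding down_set_def by blast
qed

lemma principal_subset_iff:
  assumes R: "poset_on R le" and X: "X \<in> fin_init_segs R le" and a: "a \<in> R"
  shows "down_set R le {a} \<subseteq> X \<longleftrightarrow> a \<in> X"
proof
  assume "a \<in> X"
  show "down_set R le {a} \<subseteq> X"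
  proof
    fix y assume "y \<in> down_set R le {a}"
    then have "y \<in> R" "le y a" unfolding down_set_def by auto
    then show "y \<in> X" using fin_init_segs_downward[OF R X \<open>a \<in> X\<close>] by blast
  qed
qed (use principal_mem[OF R a] in blast)

lemma finite_fin_init_segs:
  assumes fin: "\<forall>x\<in>R. finite (down_set R le {x})" and X: "X \<in> fin_init_segs R le"
  shows "finite X"
proof -
  obtain A where A: "X = down_set R le A" "A \<subseteq> R" "finite A"
    using X unfolding mem_fin_init_segs_iff by blast
  have "finite (\<Union>a\<in>A. down_set R le {a})" using A(2,3) fin by blast
  then show ?thesis using A(1) down_set_eq_UN_principal[of R le A] by simp
qed

lemma lub_in_fin_init_segs:
  assumes "finite \<X>" "\<X> \<subseteq> fin_init_segs R le"
  shows "lub_in (fin_init_segs R le) (\<subseteq>) \<X> (\<Union>\<X>)"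
proof (rule lub_inI)
  show "\<Union>\<X> \<in> fin_init_segs R le" using Union_in_fin_init_segs[OF assms] .
qed auto

lemma join_semilattice_bot_fin_init_segs: "join_semilattice_bot (fin_init_segs R le) (\<subseteq>)"
  unfolding join_semilattice_bot_def
proof (intro conjI ballI)
  fix X Y assume "X \<in> fin_init_segs R le" "Y \<in> fin_init_segs R le"
  then show "\<exists>s. lub_in (fin_init_segs R le) (\<subseteq>) {X, Y} s"
    using lub_in_fin_init_segs[of "{X, Y}"] by blast
qed (use poset_on_subset empty_in_fin_init_segs in blast)+

definition fin_init_segs_within :: "'a set \<Rightarrow> ('a \<Rightarrow> 'a \<Rightarrow> bool) \<Rightarrow> 'a set \<Rightarrow> 'a set set" where
  "fin_init_segs_within R le D = {X \<in> fin_init_segs R le. X \<subseteq> D}"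

lemma fin_init_segs_within_in_ideals:
  "fin_init_segs_within R le D \<in> ideals (fin_init_segs R le) (\<subseteq>)"
proof (rule idealI)
  show "fin_init_segs_within R le D \<noteq> {}"
    unfolding fin_init_segs_within_def using empty_in_fin_init_segs by blast
  show "\<exists>Z\<in>fin_init_segs_within R le D. X \<subseteq> Z \<and> Y \<subseteq> Z"
    if "X \<in> fin_init_segs_within R le D" "Y \<in> fin_init_segs_within R le D" for X Y
  proof -
    have "X \<union> Y \<in> fin_init_segs_within R le D"
      using that Un_in_fin_init_segs[of X R le Y] unfolding fin_init_segs_within_def by blast
    then show ?thesis by blast
  qed
qed (auto simp: fin_init_segs_within_def)

lemma fin_init_segs_within_principal_subset_iff:
  assumes R: "poset_on R le" and I: "I \<in> ideals (fin_init_segs R le) (\<subseteq>)" and a: "a \<in> R"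
  shows "fin_init_segs_within R le (down_set R le {a}) \<subseteq> I \<longleftrightarrow> a \<in> \<Union>I"
proof
  assume "fin_init_segs_within R le (down_set R le {a}) \<subseteq> I"
  then have "down_set R le {a} \<in> I"
    using principal_in_fin_init_segs[OF a] unfolding fin_init_segs_within_def by blast
  then show "a \<in> \<Union>I" using principal_mem[OF R a] by blast
next
  assume "a \<in> \<Union>I"
  then obtain X where X: "X \<in> I" "a \<in> X" by blast
  have "X \<in> fin_init_segs R le" using X(1) ideal_subset[OF I] by blast
  then have aX: "down_set R le {a} \<subseteq> X" using principal_subset_iff[OF R _ a] X(2) by blast
  show "fin_init_segs_within R le (down_set R le {a}) \<subseteq> I"
  proof
    fix Y assume "Y \<in> fin_init_segs_within R le (down_set R le {a})"
    then have "Y \<in> fin_init_segs R le" "Y \<subseteq> X" using aX unfolding fin_init_segs_within_def by auto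
    then show "Y \<in> I" using ideal_downward[OF I X(1)] by blast
  qed
qed

lemma ideal_eq_fin_init_segs_within_Union:
  assumes R: "poset_on R le" and I: "I \<in> ideals (fin_init_segs R le) (\<subseteq>)"
  shows "I = fin_init_segs_within R le (\<Union>I)"
proof
  show "I \<subseteq> fin_init_segs_within R le (\<Union>I)"
    using ideal_subset[OF I] unfolding fin_init_segs_within_def by blast
  show "fin_init_segs_within R le (\<Union>I) \<subseteq> I"
  proof
    fix X assume "X \<in> fin_init_segs_within R le (\<Union>I)"
    then have X: "X \<in> fin_init_segs R le" "X \<subseteq> \<Union>I" unfolding fin_init_segs_within_def by auto
    then obtain A where A: "X = down_set R le A" "A \<subseteq> R" "finite A"
      unfolding mem_fin_init_segs_iff by blast
    have "down_set R le {a} \<in> I" if "a \<in> A" for a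
    proof -
      have aR: "a \<in> R" using A(2) that by blast
      have "a \<in> \<Union>I" using subset_down_set[OF R A(2)] A(1) X(2) that by blast
      then have "fin_init_segs_within R le (down_set R le {a}) \<subseteq> I"
        using fin_init_segs_within_principal_subset_iff[OF R I aR] by blast
      then show ?thesis
        using principal_in_fin_init_segs[OF aR] unfolding fin_init_segs_within_def by blast
    qed
    then obtain Z where "Z \<in> I" "\<forall>a\<in>A. down_set R le {a} \<subseteq> Z"
      using ideal_finite_upper_bound[OF poset_on_subset I, of "(\<lambda>a. down_set R le {a}) ` A"] A(3)
      by blast
    moreover have "X \<subseteq> Z" if "\<forall>a\<in>A. down_set R le {a} \<subseteq> Z" for Z
      using that A(1) down_set_eq_UN_principal[of R le A] by auto
    ultimately show "X \<in> I" using ideal_downward[OF I _ X(1)] by blast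
  qed
qed

lemma Union_lub_in_ideals_fin_init_segs:
  assumes F: "F \<subseteq> ideals (fin_init_segs R le) (\<subseteq>)"
    and s: "lub_in (ideals (fin_init_segs R le) (\<subseteq>)) (\<subseteq>) F s"
  shows "\<Union>s = (\<Union>I\<in>F. \<Union>I)"
proof
  have "I \<subseteq> fin_init_segs_within R le (\<Union>I\<in>F. \<Union>I)" if "I \<in> F" for I
    using that F ideal_subset unfolding fin_init_segs_within_def by blast
  then have "s \<subseteq> fin_init_segs_within R le (\<Union>I\<in>F. \<Union>I)"
    by (rule lub_in_least[OF s fin_init_segs_within_in_ideals])
  then show "\<Union>s \<subseteq> (\<Union>I\<in>F. \<Union>I)" unfolding fin_init_segs_within_def by blast
  show "(\<Union>I\<in>F. \<Union>I) \<subseteq> \<Union>s" using lub_in_upper[OF s] by blast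
qed

section \<open>Embeddings generated by principal elements\<close>

text \<open>The \<open>p a\<close> (\<open>a \<in> R\<close>) play the principal elements of \<open>A\<close>, and \<open>c X\<close> indexes those below \<open>X\<close>.
  Injectivity holds because \<open>f X\<close> lies below \<open>\<phi> X\<close> but above \<open>\<phi> (p a)\<close> for every \<open>a \<in> c X\<close>.\<close>
lemma inj_on_lub_principal_images:
  assumes P: "poset_on P leP" and \<phi>: "order_embedding A leA P leP \<phi>"
    and p: "\<And>a. a \<in> R \<Longrightarrow> p a \<in> A" and c: "\<And>X. X \<in> A \<Longrightarrow> c X \<subseteq> R"
    and p_le_iff: "\<And>X a. X \<in> A \<Longrightarrow> a \<in> R \<Longrightarrow> leA (p a) X \<longleftrightarrow> a \<in> c X"
    and c_inj: "inj_on c A"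
    and f: "\<And>X. X \<in> A \<Longrightarrow> lub_in P leP ((\<lambda>a. \<phi> (p a)) ` c X) (f X)"
  shows "inj_on f A"
proof -
  have below: "leP (f X) (\<phi> X)" if X: "X \<in> A" for X
  proof (rule lub_in_least[OF f[OF X] order_embedding_mem[OF \<phi> X]])
    fix y assume "y \<in> (\<lambda>a. \<phi> (p a)) ` c X"
    then obtain a where a: "a \<in> c X" "y = \<phi> (p a)" by blast
    then have "a \<in> R" using c[OF X] by blast
    then have "leA (p a) X" using p_le_iff[OF X] a by blast
    then show "leP y (\<phi> X)" using order_embedding_iff[OF \<phi> p[OF \<open>a \<in> R\<close>] X] a(2) by blast
  qed
  have support_mono: "c X \<subseteq> c Y" if X: "X \<in> A" and Y: "Y \<in> A" and fXY: "f X = f Y" for X Y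
  proof
    fix a assume a: "a \<in> c X"
    have aR: "a \<in> R" using c[OF X] a by blast
    have "leP (\<phi> (p a)) (f X)" using a by (intro lub_in_upper[OF f[OF X]]) simp
    then have "leP (\<phi> (p a)) (f Y)" using fXY by simp
    then have "leP (\<phi> (p a)) (\<phi> Y)"
      using poset_on_trans[OF P order_embedding_mem[OF \<phi> p[OF aR]] lub_in_mem[OF f[OF Y]]
          order_embedding_mem[OF \<phi> Y] _ below[OF Y]] by blast
    then have "leA (p a) Y" using order_embedding_iff[OF \<phi> p[OF aR] Y] by blast
    then show "a \<in> c Y" using p_le_iff[OF Y aR] by blast
  qed
  show ?thesis
  proof (rule inj_onI)
    fix X Y assume "X \<in> A" "Y \<in> A" "f X = f Y"
    then have "c X = c Y" by (intro subset_antisym support_mono) simp_all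
    then show "X = Y" using inj_onD[OF c_inj] \<open>X \<in> A\<close> \<open>Y \<in> A\<close> by blast
  qed
qed

lemma fin_join_embedding_fin_init_segs_of_order_embedding:
  assumes R: "poset_on R leR" and P: "join_semilattice_bot P leP"
    and \<phi>: "order_embedding (fin_init_segs R leR) (\<subseteq>) P leP \<phi>"
  shows "\<exists>f. fin_join_embedding (fin_init_segs R leR) (\<subseteq>) P leP f"
proof -
  let ?Q = "fin_init_segs R leR" and ?G = "\<lambda>a. \<phi> (down_set R leR {a})"
  have pP: "poset_on P leP" using join_semilattice_bot_poset[OF P] .
  have G_mem: "?G a \<in> P" if "a \<in> R" for a
    using order_embedding_mem[OF \<phi> principal_in_fin_init_segs[OF that]] .
  have "\<forall>X\<in>?Q. \<exists>t. lub_in P leP (?G ` X) t"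
  proof
    fix X assume X: "X \<in> ?Q"
    obtain A where A: "X = down_set R leR A" "A \<subseteq> R" "finite A"
      using X unfolding mem_fin_init_segs_iff by blast
    have "?G ` A \<subseteq> P" using G_mem A(2) by blast
    then obtain t where t: "lub_in P leP (?G ` A) t"
      using join_semilattice_bot_finite_lub[OF P finite_imageI[OF A(3)]] by blast
    have "lub_in P leP (?G ` X) t"
    proof (rule lub_in_cofinal[OF pP _ _ _ t])
      show "?G ` X \<subseteq> P" using G_mem fin_init_segs_subset[OF X] by blast
      show "?G ` A \<subseteq> ?G ` X" using subset_down_set[OF R A(2)] A(1) by blast
      show "\<exists>b\<in>?G ` A. leP y b" if "y \<in> ?G ` X" for y
      proof -
        obtain x where x: "y = ?G x" "x \<in> X" using \<open>y \<in> ?G ` X\<close> by blast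
        then obtain a where xa: "a \<in> A" "x \<in> down_set R leR {a}"
          using A(1) unfolding down_set_def by blast
        have aR: "a \<in> R" using A(2) xa(1) by blast
        have "x \<in> R" using xa(2) unfolding down_set_def by blast
        then have "down_set R leR {x} \<subseteq> down_set R leR {a}"
          using principal_subset_iff[OF R principal_in_fin_init_segs[OF aR] \<open>x \<in> R\<close>] xa(2) by blast
        then have "leP y (?G a)"
          using order_embedding_iff[OF \<phi> principal_in_fin_init_segs[OF \<open>x \<in> R\<close>]
              principal_in_fin_init_segs[OF aR]] x(1) by simp
        then show ?thesis using xa(1) by blast
      qed
    qed
    then show "\<exists>t. lub_in P leP (?G ` X) t" by blast
  qed
  then obtain f where f: "\<forall>X\<in>?Q. lub_in P leP (?G ` X) (f X)" by (rule bchoice[THEN exE])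
  have f_mem: "f X \<in> P" if "X \<in> ?Q" for X using lub_in_mem[OF f[rule_format, OF that]] .
  have "inj_on f ?Q"
  proof (rule inj_on_lub_principal_images[OF pP \<phi>, where c = id and R = R])
    show "down_set R leR {a} \<in> ?Q" if "a \<in> R" for a using principal_in_fin_init_segs[OF that] .
    show "id X \<subseteq> R" if "X \<in> ?Q" for X using fin_init_segs_subset[OF that] by simp
    show "down_set R leR {a} \<subseteq> X \<longleftrightarrow> a \<in> id X" if "X \<in> ?Q" "a \<in> R" for X a
      using principal_subset_iff[OF R that] by simp
    show "lub_in P leP (?G ` id X) (f X)" if "X \<in> ?Q" for X using f that by simp
  qed simp
  moreover have "lub_in P leP (f ` \<X>) (f s)"
    if \<X>: "\<X> \<subseteq> ?Q" "finite \<X>" and s: "lub_in ?Q (\<subseteq>) \<X> s" for \<X> s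
  proof (rule lub_in_UN_lubs[OF pP])
    have "s = \<Union>\<X>" using lub_in_unique[OF poset_on_subset s lub_in_fin_init_segs[OF \<X>(2,1)]] .
    then have "(\<Union>X\<in>\<X>. ?G ` X) = ?G ` s" by blast
    then show "lub_in P leP (\<Union>X\<in>\<X>. ?G ` X) (f s)" using f lub_in_mem[OF s] by simp
    show "?G ` X \<subseteq> P" if "X \<in> \<X>" for X
      using that \<X>(1) G_mem fin_init_segs_subset[of X R leR] by blast
    show "lub_in P leP (?G ` X) (f X)" if "X \<in> \<X>" for X using that \<X>(1) f by blast
  qed
  ultimately show ?thesis unfolding fin_join_embedding_def using f_mem by blast
qed

lemma arb_join_embedding_ideals_fin_init_segs_of_order_embedding:
  assumes R: "poset_on R leR" and P: "join_semilattice_bot P leP"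
    and \<psi>: "order_embedding (ideals (fin_init_segs R leR) (\<subseteq>)) (\<subseteq>) (ideals P leP) (\<subseteq>) \<psi>"
  shows "\<exists>g. arb_join_embedding (ideals (fin_init_segs R leR) (\<subseteq>)) (\<subseteq>) (ideals P leP) (\<subseteq>) g"
proof -
  let ?J = "ideals (fin_init_segs R leR) (\<subseteq>)"
    and ?G = "\<lambda>a. \<psi> (fin_init_segs_within R leR (down_set R leR {a}))"
  define g where "g I = ideal_join P leP (?G ` \<Union>I)" for I
  have G_mem: "?G a \<in> ideals P leP" for a
    using order_embedding_mem[OF \<psi> fin_init_segs_within_in_ideals] .
  have g: "lub_in (ideals P leP) (\<subseteq>) (?G ` \<Union>I) (g I)" for I
    unfolding g_def by (rule ideal_join_lub[OF P]) (use G_mem in blast)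
  have "inj_on g ?J"
  proof (rule inj_on_lub_principal_images[OF poset_on_subset \<psi>, where c = Union and R = R])
    show "fin_init_segs_within R leR (down_set R leR {a}) \<in> ?J" for a
      by (rule fin_init_segs_within_in_ideals)
    show "\<Union>I \<subseteq> R" if "I \<in> ?J" for I
    proof
      fix a assume "a \<in> \<Union>I"
      then obtain X where "X \<in> I" "a \<in> X" by blast
      then show "a \<in> R" using fin_init_segs_subset[of X R leR] ideal_subset[OF that] by blast
    qed
    show "fin_init_segs_within R leR (down_set R leR {a}) \<subseteq> I \<longleftrightarrow> a \<in> \<Union>I"
      if "I \<in> ?J" "a \<in> R" for I a
      using fin_init_segs_within_principal_subset_iff[OF R that] .
    show "inj_on Union ?J"
    proof (rule inj_onI)
      fix I K assume "I \<in> ?J" "K \<in> ?J" "\<Union>I = \<Union>K"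
      then show "I = K" using ideal_eq_fin_init_segs_within_Union[OF R] by metis
    qed
    show "lub_in (ideals P leP) (\<subseteq>) (?G ` \<Union>I) (g I)" for I by (rule g)
  qed
  moreover have "lub_in (ideals P leP) (\<subseteq>) (g ` F) (g s)"
    if F: "F \<subseteq> ?J" and s: "lub_in ?J (\<subseteq>) F s" for F s
  proof (rule lub_in_UN_lubs[OF poset_on_subset])
    have "(\<Union>I\<in>F. ?G ` \<Union>I) = ?G ` \<Union>s"
      using Union_lub_in_ideals_fin_init_segs[OF F s] by blast
    then show "lub_in (ideals P leP) (\<subseteq>) (\<Union>I\<in>F. ?G ` \<Union>I) (g s)" using g[of s] by simp
    show "?G ` \<Union>I \<subseteq> ideals P leP" for I using G_mem by blast
    show "lub_in (ideals P leP) (\<subseteq>) (?G ` \<Union>I) (g I)" for I by (rule g)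
  qed
  moreover have "g ` ?J \<subseteq> ideals P leP" using lub_in_mem[OF g] by blast
  ultimately show ?thesis unfolding arb_join_embedding_def by blast
qed

text \<open>Each \<open>a \<in> R\<close> is sent to a witness \<open>q a\<close> that the \<open>\<psi>\<close>-image of the ideal of segments inside
  \<open>\<down>a\<close> is not contained in that of the ideal of segments inside \<open>R - \<up>a\<close>; as principal
  down-sets are finite, every \<open>X\<close> is finite and is sent to the join of the witnesses of its
  elements.\<close>
lemma order_embedding_fin_init_segs_of_ideals:
  assumes R: "poset_on R leR" and P: "join_semilattice_bot P leP"
    and fin: "\<forall>x\<in>R. finite (down_set R leR {x})"
    and \<psi>: "order_embedding (ideals (fin_init_segs R leR) (\<subseteq>)) (\<subseteq>) (ideals P leP) (\<subseteq>) \<psi>"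
  shows "\<exists>f. order_embedding (fin_init_segs R leR) (\<subseteq>) P leP f"
proof -
  let ?Q = "fin_init_segs R leR" and ?W = "fin_init_segs_within R leR"
  let ?N = "\<lambda>a. R - {y \<in> R. leR a y}"
  have pP: "poset_on P leP" using join_semilattice_bot_poset[OF P] .
  have \<psi>W: "\<psi> (?W D) \<in> ideals P leP" for D
    using order_embedding_mem[OF \<psi> fin_init_segs_within_in_ideals] .
  have \<psi>_mono: "\<psi> (?W D) \<subseteq> \<psi> (?W D') \<longleftrightarrow> ?W D \<subseteq> ?W D'" for D D'
    using order_embedding_iff[OF \<psi> fin_init_segs_within_in_ideals fin_init_segs_within_in_ideals] .
  have "\<forall>a\<in>R. \<exists>q. q \<in> \<psi> (?W (down_set R leR {a})) \<and> q \<notin> \<psi> (?W (?N a))"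
  proof
    fix a assume a: "a \<in> R"
    have "down_set R leR {a} \<in> ?W (down_set R leR {a})"
      using principal_in_fin_init_segs[OF a] unfolding fin_init_segs_within_def by blast
    moreover have "a \<notin> ?N a" using poset_on_refl[OF R a] by blast
    then have "down_set R leR {a} \<notin> ?W (?N a)"
      using principal_mem[OF R a] unfolding fin_init_segs_within_def by blast
    ultimately have "\<not> ?W (down_set R leR {a}) \<subseteq> ?W (?N a)" by blast
    then show "\<exists>q. q \<in> \<psi> (?W (down_set R leR {a})) \<and> q \<notin> \<psi> (?W (?N a))"
      unfolding \<psi>_mono[symmetric] by blast
  qed
  then obtain q where q: "\<forall>a\<in>R. q a \<in> \<psi> (?W (down_set R leR {a})) \<and> q a \<notin> \<psi> (?W (?N a))"
    by (rule bchoice[THEN exE])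
  have q_mem: "q a \<in> P" if "a \<in> R" for a
    using q that ideal_subset[OF \<psi>W] by blast
  have "\<forall>X\<in>?Q. \<exists>t. lub_in P leP (q ` X) t"
  proof
    fix X assume X: "X \<in> ?Q"
    have "q ` X \<subseteq> P" using q_mem fin_init_segs_subset[OF X] by blast
    then show "\<exists>t. lub_in P leP (q ` X) t"
      using join_semilattice_bot_finite_lub[OF P finite_imageI[OF finite_fin_init_segs[OF fin X]]]
      by blast
  qed
  then obtain f where f: "\<forall>X\<in>?Q. lub_in P leP (q ` X) (f X)" by (rule bchoice[THEN exE])
  have f_mem: "f X \<in> P" if "X \<in> ?Q" for X using lub_in_mem[OF f[rule_format, OF that]] .
  have f_in_\<psi>W: "f Y \<in> \<psi> (?W Y)" if Y: "Y \<in> ?Q" for Y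
  proof (rule ideal_lub_mem[OF pP \<psi>W])
    show "finite (q ` Y)" using finite_fin_init_segs[OF fin Y] by blast
    show "lub_in P leP (q ` Y) (f Y)" using f Y by blast
    show "q ` Y \<subseteq> \<psi> (?W Y)"
    proof
      fix z assume "z \<in> q ` Y"
      then obtain b where b: "b \<in> Y" "z = q b" by blast
      have bR: "b \<in> R" using fin_init_segs_subset[OF Y] b(1) by blast
      have "?W (down_set R leR {b}) \<subseteq> ?W Y"
        using principal_subset_iff[OF R Y bR] b(1) unfolding fin_init_segs_within_def by blast
      then have "\<psi> (?W (down_set R leR {b})) \<subseteq> \<psi> (?W Y)" using \<psi>_mono by blast
      then show "z \<in> \<psi> (?W Y)" using q bR b(2) by blast
    qed
  qed
  have "leP (f X) (f Y) \<longleftrightarrow> X \<subseteq> Y" if X: "X \<in> ?Q" and Y: "Y \<in> ?Q" for X Y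
  proof
    assume "X \<subseteq> Y"
    then show "leP (f X) (f Y)"
      using lub_in_mono[OF f[rule_format, OF X] f[rule_format, OF Y]] by blast
  next
    assume le: "leP (f X) (f Y)"
    show "X \<subseteq> Y"
    proof
      fix a assume a: "a \<in> X"
      have aR: "a \<in> R" using fin_init_segs_subset[OF X] a by blast
      have "leP (q a) (f X)" using lub_in_upper[OF f[rule_format, OF X]] a by blast
      then have qa_le: "leP (q a) (f Y)"
        using poset_on_trans[OF pP q_mem[OF aR] f_mem[OF X] f_mem[OF Y] _ le] by blast
      show "a \<in> Y"
      proof (rule ccontr)
        assume "a \<notin> Y"
        then have "Y \<subseteq> ?N a"
          using fin_init_segs_downward[OF R Y _ aR] fin_init_segs_subset[OF Y] by blast
        then have "?W Y \<subseteq> ?W (?N a)" unfolding fin_init_segs_within_def by blast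
        then have "f Y \<in> \<psi> (?W (?N a))" using \<psi>_mono f_in_\<psi>W[OF Y] by blast
        then have "q a \<in> \<psi> (?W (?N a))" using ideal_downward[OF \<psi>W _ q_mem[OF aR] qa_le] by blast
        then show False using q aR by blast
      qed
    qed
  qed
  then show ?thesis unfolding order_embedding_def using f_mem by blast
qed

lemma ex_order_embedding_iff_ex_fin_join_embedding_fin_init_segs:
  assumes R: "poset_on R leR" and P: "join_semilattice_bot P leP"
  shows "(\<exists>f. order_embedding (fin_init_segs R leR) (\<subseteq>) P leP f)
    \<longleftrightarrow> (\<exists>f. fin_join_embedding (fin_init_segs R leR) (\<subseteq>) P leP f)"
proof
  assume "\<exists>f. fin_join_embedding (fin_init_segs R leR) (\<subseteq>) P leP f"
  then obtain f where "fin_join_embedding (fin_init_segs R leR) (\<subseteq>) P leP f" ..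
  then have "order_embedding (fin_init_segs R leR) (\<subseteq>) P leP f"
    by (intro join_embedding_imp_order_embedding[OF poset_on_subset join_semilattice_bot_poset[OF P]
          join_semilattice_bot_lub_pair[OF join_semilattice_bot_fin_init_segs]]
        fin_join_embedding_imp_join_embedding)
  then show "\<exists>f. order_embedding (fin_init_segs R leR) (\<subseteq>) P leP f" by blast
qed (elim exE, rule fin_join_embedding_fin_init_segs_of_order_embedding[OF R P])

lemma ex_order_embedding_iff_ex_arb_join_embedding_ideals_fin_init_segs:
  assumes R: "poset_on R leR" and P: "join_semilattice_bot P leP"
  shows "(\<exists>g. order_embedding (ideals (fin_init_segs R leR) (\<subseteq>)) (\<subseteq>) (ideals P leP) (\<subseteq>) g)
    \<longleftrightarrow> (\<exists>g. arb_join_embedding (ideals (fin_init_segs R leR) (\<subseteq>)) (\<subseteq>) (ideals P leP) (\<subseteq>) g)"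
proof -
  let ?J = "ideals (fin_init_segs R leR) (\<subseteq>)"
  have "\<exists>s. lub_in ?J (\<subseteq>) {I, K} s" if "I \<in> ?J" "K \<in> ?J" for I K
  proof
    show "lub_in ?J (\<subseteq>) {I, K} (ideal_join (fin_init_segs R leR) (\<subseteq>) {I, K})"
      by (rule ideal_join_lub[OF join_semilattice_bot_fin_init_segs]) (use that in blast)
  qed
  then have "order_embedding ?J (\<subseteq>) (ideals P leP) (\<subseteq>) g"
    if "arb_join_embedding ?J (\<subseteq>) (ideals P leP) (\<subseteq>) g" for g
    using join_embedding_imp_order_embedding[OF poset_on_subset poset_on_subset _
        arb_join_embedding_imp_join_embedding[OF that]] by blast
  then show ?thesis
    using arb_join_embedding_ideals_fin_init_segs_of_order_embedding[OF R P] by blast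
qed

lemma ex_order_embedding_fin_init_segs_iff_ideals:
  assumes R: "poset_on R leR" and P: "join_semilattice_bot P leP"
    and fin: "\<forall>x\<in>R. finite (down_set R leR {x})"
  shows "(\<exists>f. order_embedding (fin_init_segs R leR) (\<subseteq>) P leP f)
    \<longleftrightarrow> (\<exists>g. order_embedding (ideals (fin_init_segs R leR) (\<subseteq>)) (\<subseteq>) (ideals P leP) (\<subseteq>) g)"
proof
  assume "\<exists>f. order_embedding (fin_init_segs R leR) (\<subseteq>) P leP f"
  then obtain f where "order_embedding (fin_init_segs R leR) (\<subseteq>) P leP f" ..
  then show "\<exists>g. order_embedding (ideals (fin_init_segs R leR) (\<subseteq>)) (\<subseteq>) (ideals P leP) (\<subseteq>) g"
    using ideals_order_embedding_down_set_image[OF join_semilattice_bot_poset[OF P]] by blast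
qed (elim exE, rule order_embedding_fin_init_segs_of_ideals[OF R P fin])

theorem proposition1p3:
  fixes P :: "'p set" and leP :: "'p \<Rightarrow> 'p \<Rightarrow> bool"
    and Q :: "'q set" and leQ :: "'q \<Rightarrow> 'q \<Rightarrow> bool"
  assumes "join_semilattice_bot P leP" and "join_semilattice_bot Q leQ"
  shows
    "((\<exists>f. join_embedding Q leQ P leP f) \<longleftrightarrow> (\<exists>f. fin_join_embedding Q leQ P leP f))
     \<and> ((\<exists>f. join_embedding Q leQ P leP f) \<longrightarrow>
          (\<exists>g. arb_join_embedding (ideals Q leQ) (\<subseteq>) (ideals P leP) (\<subseteq>) g))
     \<and> (\<forall>(R :: 'r set) leR. poset_on R leR \<longrightarrow>
          (let Q' = fin_init_segs R leR in
            ((\<exists>f. order_embedding Q' (\<subseteq>) P leP f) \<longleftrightarrow>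
               (\<exists>f. fin_join_embedding Q' (\<subseteq>) P leP f))
          \<and> ((\<exists>g. order_embedding (ideals Q' (\<subseteq>)) (\<subseteq>) (ideals P leP) (\<subseteq>) g) \<longleftrightarrow>
               (\<exists>g. arb_join_embedding (ideals Q' (\<subseteq>)) (\<subseteq>) (ideals P leP) (\<subseteq>) g))
          \<and> ((\<forall>x\<in>R. finite (down_set R leR {x})) \<longrightarrow>
               ((\<exists>f. order_embedding Q' (\<subseteq>) P leP f) \<longleftrightarrow>
                (\<exists>g. order_embedding (ideals Q' (\<subseteq>)) (\<subseteq>) (ideals P leP) (\<subseteq>) g)))))"
  unfolding Let_def
  using ex_join_embedding_iff_ex_fin_join_embedding[OF assms]
    ex_arb_join_embedding_ideals[OF assms]
    ex_order_embedding_iff_ex_fin_join_embedding_fin_init_segs[OF _ assms(1)]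
    ex_order_embedding_iff_ex_arb_join_embedding_ideals_fin_init_segs[OF _ assms(1)]
    ex_order_embedding_fin_init_segs_iff_ideals[OF _ assms(1)]
  by (intro conjI allI impI) blast+

end
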